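(* Let $d,n\in\mathbb{N}$, $p\ge1$, and $\Omega\subseteq\mathbb{R}^d$ compact. On the space $\mathcal{S}_{=n}(\Omega)$ of multisets of exactly $n$ elements of $\Omega$, endowed with the metric $W_1$, define $s(X;a)=\mathrm{sort}(a^TX)\in\mathbb{R}^n$, where $X=\{\!\!\{ x_1,\dots,x_n\}\!\!\}$, $a^TX=(a\cdot x_1,\dots,a\cdot x_n)$, $\mathrm{sort}$ sorts entries nondecreasingly, and $a$ is uniform on $S^{d-1}$; the output metric is $\ell_p$. Then $s$ is uniformly Lipschitz and lower Lipschitz in expectation.
   Context: $W_1(\{\!\!\{ x_j\}\!\!\},\{\!\!\{ y_j\}\!\!\})=\min_{\tau\in S_n}\sum_{j=1}^n\|x_j-y_{\tau(j)}\|_1$. A parametric function is uniformly Lipschitz if it is $L$-Lipschitz in $x$ for every parameter with a common $L$; it is lower Lipschitz in expectation if there is $c>0$ with $c^p\le\mathbb{E}_a\left[\left(\frac{\|s(X;a)-s(Y;a)\|_p}{W_1(X,Y)}\right)^p\right]$ whenever $W_1(X,Y)>0$. *)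

theory Defs
  imports "HOL-Analysis.Analysis" "HOL-Library.Multiset" "HOL-Combinatorics.Permutations"
begin

definition l1norm :: "'d::euclidean_space \<Rightarrow> real" where
  "l1norm x = (\<Sum>b\<in>Basis. \<bar>x \<bullet> b\<bar>)"

definition S_eq :: "nat \<Rightarrow> 'd set \<Rightarrow> 'd multiset set" where
  "S_eq n \<Omega> = {X. size X = n \<and> set_mset X \<subseteq> \<Omega>}"

definition W1 :: "'d::euclidean_space multiset \<Rightarrow> 'd multiset \<Rightarrow> real" where
  "W1 X Y = Min {(\<Sum>j<length xs. l1norm (xs ! j - ys ! (\<tau> j))) | xs ys \<tau>.
      mset xs = X \<and> mset ys = Y \<and> \<tau> permutes {..<length xs}}"

definition sort_embed :: "'d::euclidean_space multiset \<Rightarrow> 'd \<Rightarrow> real list" where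
  "sort_embed X a = sorted_list_of_multiset (image_mset (\<lambda>x. a \<bullet> x) X)"

definition lp_dist :: "real \<Rightarrow> real list \<Rightarrow> real list \<Rightarrow> real" where
  "lp_dist p u v = (\<Sum>i<length u. \<bar>u ! i - v ! i\<bar> powr p) powr (1 / p)"

text \<open>Uniform (normalized surface) probability measure on S^{d-1}: push-forward of the
  uniform distribution on the unit ball under x \<mapsto> x/|x|.\<close>
definition uniform_sphere :: "'d::euclidean_space measure" where
  "uniform_sphere = distr (uniform_measure lborel (ball 0 1)) borel (\<lambda>x. x /\<^sub>R norm x)"

definition uniformly_lipschitz ::
    "('x \<Rightarrow> 'a \<Rightarrow> 'y) \<Rightarrow> 'x set \<Rightarrow> 'a set \<Rightarrow> ('x \<Rightarrow> 'x \<Rightarrow> real) \<Rightarrow> ('y \<Rightarrow> 'y \<Rightarrow> real) \<Rightarrow> bool" where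
  "uniformly_lipschitz s D A dX dY \<longleftrightarrow>
     (\<exists>L. \<forall>a\<in>A. \<forall>X\<in>D. \<forall>Y\<in>D. dY (s X a) (s Y a) \<le> L * dX X Y)"

definition lower_lipschitz_in_expectation ::
    "('x \<Rightarrow> 'a \<Rightarrow> 'y) \<Rightarrow> 'x set \<Rightarrow> 'a measure \<Rightarrow> real \<Rightarrow> ('x \<Rightarrow> 'x \<Rightarrow> real) \<Rightarrow> ('y \<Rightarrow> 'y \<Rightarrow> real) \<Rightarrow> bool" where
  "lower_lipschitz_in_expectation s D M p dX dY \<longleftrightarrow>
     (\<exists>c>0. \<forall>X\<in>D. \<forall>Y\<in>D. dX X Y > 0 \<longrightarrow>
        c powr p \<le> (\<integral>a. (dY (s X a) (s Y a) / dX X Y) powr p \<partial>M))"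

end

theory Submission
  imports Defs "HOL-Probability.Probability_Measure"
begin

text \<open>Upper bound: along a unit direction \<open>a\<close>, sorting is an optimal matching of the projected
  points (rearrangement inequality), so the \<open>\<ell>\<^sub>1\<close> distance of the sorted projections is at most the
  projected cost of an optimal \<open>W\<^sub>1\<close> matching, and \<open>\<bar>a \<bullet> (x - y)\<bar> \<le> \<parallel>x - y\<parallel>\<^sub>1\<close>.

  Lower bound: each slab \<open>{a. \<bar>a \<bullet> v\<bar> < \<delta> \<parallel>v\<parallel>}\<close> has small probability, uniformly in \<open>v\<close>,
  because hyperplanes are null sets and the unit sphere is compact. Hence with probability at
  least \<open>1/2\<close> a random direction avoids all \<open>n\<^sup>2\<close> slabs of the differences \<open>x - y\<close>, and for such
  an \<open>a\<close> the matching of \<open>X\<close> and \<open>Y\<close> in the order of their projections shows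
  \<open>W\<^sub>1(X, Y) \<le> (n DIM('d) / \<delta>) \<parallel>s(X; a) - s(Y; a)\<parallel>\<^sub>p\<close>.\<close>

section \<open>Sorting is an optimal matching on the real line\<close>

definition sorted_l1_dist :: "real multiset \<Rightarrow> real multiset \<Rightarrow> real" where
  "sorted_l1_dist A B =
     (\<Sum>i<size A. \<bar>sorted_list_of_multiset A ! i - sorted_list_of_multiset B ! i\<bar>)"

definition coupling_cost :: "(real \<times> real) multiset \<Rightarrow> real" where
  "coupling_cost P = sum_mset (image_mset (\<lambda>(x, y). \<bar>x - y\<bar>) P)"

lemma sorted_list_of_multiset_add_mset_greatest:
  assumes "\<forall>x\<in>#M. x \<le> a"
  shows "sorted_list_of_multiset (add_mset a M) = sorted_list_of_multiset M @ [a]"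
proof -
  have "sorted (sorted_list_of_multiset M @ [a])"
    using assms by (simp add: sorted_append)
  moreover have "mset (sorted_list_of_multiset M @ [a]) = add_mset a M" by simp
  ultimately show ?thesis
    by (metis properties_for_sort sorted_list_of_multiset_mset)
qed

lemma length_sorted_list_of_multiset [simp]:
  "length (sorted_list_of_multiset M) = size M"
  by (metis mset_sorted_list_of_multiset size_mset)

lemma sorted_l1_dist_add_mset_greatest:
  assumes "size A = size C" "\<forall>x\<in>#A. x \<le> a" "\<forall>x\<in>#C. x \<le> c"
  shows "sorted_l1_dist (add_mset a A) (add_mset c C) = sorted_l1_dist A C + \<bar>a - c\<bar>"
  using assms unfolding sorted_l1_dist_def
  by (simp only: sorted_list_of_multiset_add_mset_greatest) (simp add: nth_append)

text \<open>Exchanging partners moves the pair of the two maxima into the coupling without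
  increasing the cost, since \<open>\<bar>A - C\<bar> + \<bar>x - y\<bar> \<le> \<bar>A - y\<bar> + \<bar>x - C\<bar>\<close> for \<open>x \<le> A\<close>, \<open>y \<le> C\<close>.\<close>

lemma coupling_exchange_maxima:
  fixes P :: "(real \<times> real) multiset"
  defines "A \<equiv> Max_mset (image_mset fst P)" and "C \<equiv> Max_mset (image_mset snd P)"
  assumes "P \<noteq> {#}"
  obtains Q where "image_mset fst Q = image_mset fst P" "image_mset snd Q = image_mset snd P"
    "coupling_cost Q \<le> coupling_cost P" "(A, C) \<in># Q"
proof -
  have "A \<in># image_mset fst P" "C \<in># image_mset snd P"
    unfolding A_def C_def using assms(3) by (simp_all add: Max_in_mset)
  then obtain y x where Ay: "(A, y) \<in># P" and xC: "(x, C) \<in># P" by force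
  have "x \<le> A" "y \<le> C"
    using Ay xC unfolding A_def C_def by (force intro!: Max_ge)+
  show ?thesis
  proof (cases "(A, y) = (x, C)")
    case True
    then show ?thesis using that Ay by simp
  next
    case False
    define R where "R = P - {#(A, y)#} - {#(x, C)#}"
    have "(x, C) \<in># P - {#(A, y)#}"
      using xC False by (auto simp: in_diff_count)
    then have P: "P = add_mset (A, y) (add_mset (x, C) R)"
      unfolding R_def using Ay by (metis insert_DiffM)
    have "\<bar>A - C\<bar> + \<bar>x - y\<bar> \<le> \<bar>A - y\<bar> + \<bar>x - C\<bar>"
      using \<open>x \<le> A\<close> \<open>y \<le> C\<close> by linarith
    then show ?thesis
      by (intro that[of "add_mset (A, C) (add_mset (x, y) R)"])
        (simp_all add: P coupling_cost_def add_mset_commute)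
  qed
qed

lemma sorted_l1_dist_le_coupling_cost:
  "sorted_l1_dist (image_mset fst P) (image_mset snd P) \<le> coupling_cost P"
proof (induction "size P" arbitrary: P rule: less_induct)
  case less
  show ?case
  proof (cases "P = {#}")
    case True
    then show ?thesis by (simp add: sorted_l1_dist_def coupling_cost_def)
  next
    case False
    define A where "A = Max_mset (image_mset fst P)"
    define C where "C = Max_mset (image_mset snd P)"
    obtain Q where fst_Q: "image_mset fst Q = image_mset fst P"
      and snd_Q: "image_mset snd Q = image_mset snd P"
      and cost_Q: "coupling_cost Q \<le> coupling_cost P" and "(A, C) \<in># Q"
      using coupling_exchange_maxima[OF False] unfolding A_def C_def by blast
    define R where "R = Q - {#(A, C)#}"
    have Q: "Q = add_mset (A, C) R"
      unfolding R_def using \<open>(A, C) \<in># Q\<close> by simp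
    have "size R < size P"
      using arg_cong[OF fst_Q, of size] by (simp add: Q)
    have "\<forall>x\<in>#image_mset fst R. x \<le> A" "\<forall>x\<in>#image_mset snd R. x \<le> C"
      unfolding A_def C_def fst_Q[symmetric] snd_Q[symmetric] by (auto simp: Q)
    then have "sorted_l1_dist (image_mset fst P) (image_mset snd P)
        = sorted_l1_dist (image_mset fst R) (image_mset snd R) + \<bar>A - C\<bar>"
      unfolding fst_Q[symmetric] snd_Q[symmetric]
      by (simp add: Q sorted_l1_dist_add_mset_greatest)
    also have "\<dots> \<le> coupling_cost R + \<bar>A - C\<bar>"
      using less \<open>size R < size P\<close> by simp
    also have "\<dots> = coupling_cost Q"
      by (simp add: Q coupling_cost_def)
    finally show ?thesis using cost_Q by simp
  qed
qed

lemma image_mset_nth_mset_set: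
  "image_mset (\<lambda>j. f (xs ! j)) (mset_set {..<length xs}) = image_mset f (mset xs)"
  by (metis (no_types, lifting) map_eq_conv map_map map_nth mset_map mset_set_upto_eq_mset_upto comp_def)

lemma sorted_l1_dist_le_matching_cost:
  fixes g :: "'a \<Rightarrow> real"
  assumes "length ys = length xs" "\<tau> permutes {..<length xs}"
  shows "sorted_l1_dist (image_mset g (mset xs)) (image_mset g (mset ys))
    \<le> (\<Sum>j<length xs. \<bar>g (xs ! j) - g (ys ! \<tau> j)\<bar>)"
proof -
  define P where "P = image_mset (\<lambda>j. (g (xs ! j), g (ys ! \<tau> j))) (mset_set {..<length xs})"
  have "image_mset snd P = image_mset (\<lambda>j. g (ys ! j)) (mset_set {..<length xs})"
    unfolding P_def image_mset.compositionality comp_def snd_conv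
    by (rule sym, rule permutes_implies_image_mset_eq[OF assms(2)]) simp
  then have "image_mset snd P = image_mset g (mset ys)"
    using assms(1) image_mset_nth_mset_set[of g ys] by simp
  moreover have "image_mset fst P = image_mset g (mset xs)"
    unfolding P_def image_mset.compositionality comp_def fst_conv
    by (rule image_mset_nth_mset_set)
  moreover have "coupling_cost P = (\<Sum>j<length xs. \<bar>g (xs ! j) - g (ys ! \<tau> j)\<bar>)"
    unfolding coupling_cost_def P_def by (simp add: sum_unfold_sum_mset image_mset.compositionality comp_def)
  ultimately show ?thesis
    using sorted_l1_dist_le_coupling_cost[of P] by simp
qed

lemma length_sort_embed [simp]: "length (sort_embed X a) = size X"
  by (simp add: sort_embed_def)

lemma sum_abs_sort_embed_diff:
  "(\<Sum>i<size X. \<bar>sort_embed X a ! i - sort_embed Y b ! i\<bar>)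
    = sorted_l1_dist (image_mset ((\<bullet>) a) X) (image_mset ((\<bullet>) b) Y)"
  by (simp add: sorted_l1_dist_def sort_embed_def)

lemma sort_embed_eq_map_sorted_enumeration:
  obtains xs where "mset xs = X" "sort_embed X a = map ((\<bullet>) a) xs"
proof -
  obtain ys where ys: "mset ys = X" using ex_mset by blast
  define xs where "xs = sort_key ((\<bullet>) a) ys"
  have "mset xs = X" unfolding xs_def using ys by simp
  moreover have "sort_embed X a = map ((\<bullet>) a) xs"
    unfolding sort_embed_def \<open>mset xs = X\<close>[symmetric] mset_map[symmetric]
      sorted_list_of_multiset_mset xs_def
    by (rule sorted_sort_id) simp
  ultimately show ?thesis using that by blast
qed

section \<open>Sorted projections versus \<open>W\<^sub>1\<close>\<close>

lemma sum_powr_root_le_sum: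
  fixes w :: "'i \<Rightarrow> real"
  assumes "p \<ge> 1" "\<And>i. i \<in> I \<Longrightarrow> w i \<ge> 0"
  shows "(\<Sum>i\<in>I. w i powr p) powr (1 / p) \<le> (\<Sum>i\<in>I. w i)"
proof (cases "finite I")
  case True
  define S where "S = (\<Sum>i\<in>I. w i)"
  have "S \<ge> 0" unfolding S_def using assms by (simp add: sum_nonneg)
  have "w i powr p \<le> w i * S powr (p - 1)" if "i \<in> I" for i
  proof -
    have "w i \<le> S" unfolding S_def using True assms(2) that by (intro member_le_sum) auto
    then have "w i * w i powr (p - 1) \<le> w i * S powr (p - 1)"
      using assms that by (intro mult_left_mono powr_mono2) auto
    then show ?thesis using powr_add[of "w i" 1 "p - 1"] assms(2)[OF that] by simp
  qed
  then have "(\<Sum>i\<in>I. w i powr p) \<le> S * S powr (p - 1)"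
    unfolding S_def sum_distrib_right by (rule sum_mono)
  also have "\<dots> = S powr p"
    using powr_add[of S 1 "p - 1"] \<open>S \<ge> 0\<close> assms(1) by (cases "S = 0") auto
  finally have "(\<Sum>i\<in>I. w i powr p) powr (1 / p) \<le> (S powr p) powr (1 / p)"
    using assms by (intro powr_mono2) (auto intro!: sum_nonneg)
  then show ?thesis using assms(1) \<open>S \<ge> 0\<close> by (simp add: S_def powr_powr)
qed simp

lemma le_sum_powr_root:
  fixes w :: "'i \<Rightarrow> real"
  assumes "p \<ge> 1" "finite I" "\<And>i. i \<in> I \<Longrightarrow> w i \<ge> 0" "k \<in> I"
  shows "w k \<le> (\<Sum>i\<in>I. w i powr p) powr (1 / p)"
proof -
  have "w k = (w k powr p) powr (1 / p)" using assms by (simp add: powr_powr)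
  also have "\<dots> \<le> (\<Sum>i\<in>I. w i powr p) powr (1 / p)"
    using assms by (intro powr_mono2 member_le_sum) auto
  finally show ?thesis .
qed

lemma lp_dist_le_sum_abs_diff:
  "p \<ge> 1 \<Longrightarrow> lp_dist p u v \<le> (\<Sum>i<length u. \<bar>u ! i - v ! i\<bar>)"
  unfolding lp_dist_def by (rule sum_powr_root_le_sum) auto

lemma sum_abs_diff_le_lp_dist:
  assumes "p \<ge> 1"
  shows "(\<Sum>i<length u. \<bar>u ! i - v ! i\<bar>) \<le> real (length u) * lp_dist p u v"
proof -
  have "(\<Sum>i<length u. \<bar>u ! i - v ! i\<bar>) \<le> (\<Sum>i<length u. lp_dist p u v)"
    unfolding lp_dist_def using assms by (intro sum_mono le_sum_powr_root) auto
  then show ?thesis by simp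
qed

lemma lp_dist_nonneg: "lp_dist p u v \<ge> 0"
  by (simp add: lp_dist_def)

lemma l1norm_le_norm: "l1norm (z::'d::euclidean_space) \<le> real DIM('d) * norm z"
proof -
  have "l1norm z \<le> (\<Sum>b\<in>(Basis::'d set). norm z)"
    unfolding l1norm_def by (rule sum_mono) (simp add: Basis_le_norm)
  then show ?thesis by simp
qed

definition W1_costs :: "'d::euclidean_space multiset \<Rightarrow> 'd multiset \<Rightarrow> real set" where
  "W1_costs X Y = {(\<Sum>j<length xs. l1norm (xs ! j - ys ! (\<tau> j))) | xs ys \<tau>.
      mset xs = X \<and> mset ys = Y \<and> \<tau> permutes {..<length xs}}"

lemma W1_eq_Min_W1_costs: "W1 X Y = Min (W1_costs X Y)"
  unfolding W1_def W1_costs_def ..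

lemma finite_W1_costs: "finite (W1_costs X Y)"
proof -
  let ?cost = "\<lambda>(xs, ys, \<tau>). \<Sum>j<length xs. l1norm (xs ! j - ys ! (\<tau> j))"
  let ?M = "{xs. set xs \<subseteq> set_mset X \<and> length xs = size X} \<times>
      {ys. set ys \<subseteq> set_mset Y \<and> length ys = size Y} \<times> {\<tau>. \<tau> permutes {..<size X}}"
  have "W1_costs X Y \<subseteq> ?cost ` ?M"
    unfolding W1_costs_def by (auto simp: image_iff) blast
  moreover have "finite ?M"
    by (intro finite_cartesian_product finite_lists_length_eq finite_permutations) auto
  ultimately show ?thesis by (meson finite_imageI finite_subset)
qed

lemma W1_le:
  assumes "mset xs = X" "mset ys = Y" "\<tau> permutes {..<length xs}"
  shows "W1 X Y \<le> (\<Sum>j<length xs. l1norm (xs ! j - ys ! (\<tau> j)))"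
  unfolding W1_eq_Min_W1_costs using assms finite_W1_costs
  by (intro Min_le) (auto simp: W1_costs_def)

lemma W1_attained:
  obtains xs ys \<tau> where "mset xs = X" "mset ys = Y" "\<tau> permutes {..<length xs}"
    "W1 X Y = (\<Sum>j<length xs. l1norm (xs ! j - ys ! (\<tau> j)))"
proof -
  obtain xs ys where "mset xs = X" "mset ys = Y" using ex_mset by metis
  then have "W1_costs X Y \<noteq> {}" unfolding W1_costs_def using permutes_id by blast
  then have "W1 X Y \<in> W1_costs X Y"
    unfolding W1_eq_Min_W1_costs using finite_W1_costs by (rule Min_in[rotated])
  then show ?thesis using that unfolding W1_costs_def by blast
qed

lemma W1_empty: "W1 {#} {#} = 0"
  using W1_attained[of "{#}" "{#}"] by (metis lessThan_0 length_0_conv mset_zero_iff sum.empty)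

lemma lp_dist_sort_embed_le_W1:
  fixes X Y :: "'d::euclidean_space multiset"
  assumes "p \<ge> 1" "size X = size Y" "norm a \<le> 1"
  shows "lp_dist p (sort_embed X a) (sort_embed Y a) \<le> W1 X Y"
proof -
  obtain xs ys \<tau> where xs: "mset xs = X" "mset ys = Y" "\<tau> permutes {..<length xs}"
    and W1: "W1 X Y = (\<Sum>j<length xs. l1norm (xs ! j - ys ! (\<tau> j)))"
    by (rule W1_attained)
  have "length ys = length xs" using xs assms(2) by (metis size_mset)
  have "lp_dist p (sort_embed X a) (sort_embed Y a)
      \<le> sorted_l1_dist (image_mset ((\<bullet>) a) X) (image_mset ((\<bullet>) a) Y)"
    using lp_dist_le_sum_abs_diff[OF assms(1), of "sort_embed X a" "sort_embed Y a"]
    by (simp add: sum_abs_sort_embed_diff)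
  also have "\<dots> \<le> (\<Sum>j<length xs. \<bar>a \<bullet> xs ! j - a \<bullet> ys ! \<tau> j\<bar>)"
    unfolding xs(1,2)[symmetric]
    by (rule sorted_l1_dist_le_matching_cost) fact+
  also have "\<dots> \<le> W1 X Y"
    unfolding W1
  proof (rule sum_mono)
    fix j
    have "\<bar>a \<bullet> xs ! j - a \<bullet> ys ! \<tau> j\<bar> \<le> norm a * norm (xs ! j - ys ! \<tau> j)"
      unfolding inner_diff_right[symmetric] by (rule Cauchy_Schwarz_ineq2)
    also have "\<dots> \<le> l1norm (xs ! j - ys ! \<tau> j)"
      using assms(3) norm_le_l1[of "xs ! j - ys ! \<tau> j"] unfolding l1norm_def
      by (meson mult_left_le_one_le norm_ge_zero order_trans)
    finally show "\<bar>a \<bullet> xs ! j - a \<bullet> ys ! \<tau> j\<bar> \<le> l1norm (xs ! j - ys ! \<tau> j)" .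
  qed
  finally show ?thesis .
qed

lemma W1_le_lp_dist_sort_embed:
  fixes X Y :: "'d::euclidean_space multiset"
  assumes "p \<ge> 1" "size X = n" "size Y = n" "n \<ge> 1" "\<delta> > 0"
    and separated: "\<forall>x\<in>#X. \<forall>y\<in>#Y. \<delta> * norm (x - y) \<le> \<bar>a \<bullet> (x - y)\<bar>"
  shows "\<delta> / (real n * real DIM('d)) * W1 X Y \<le> lp_dist p (sort_embed X a) (sort_embed Y a)"
proof -
  obtain xs where xs: "mset xs = X" "sort_embed X a = map ((\<bullet>) a) xs"
    by (rule sort_embed_eq_map_sorted_enumeration)
  obtain ys where ys: "mset ys = Y" "sort_embed Y a = map ((\<bullet>) a) ys"
    by (rule sort_embed_eq_map_sorted_enumeration)
  have len: "length xs = n" "length ys = n" using xs ys assms(2,3) by (metis size_mset)+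
  have "W1 X Y \<le> (\<Sum>j<n. l1norm (xs ! j - ys ! j))"
    using W1_le[OF xs(1) ys(1) permutes_id] len by simp
  also have "\<dots> \<le> (\<Sum>j<n. real DIM('d) / \<delta> * \<bar>a \<bullet> xs ! j - a \<bullet> ys ! j\<bar>)"
  proof (rule sum_mono)
    fix j assume "j \<in> {..<n}"
    then have "xs ! j \<in># X" "ys ! j \<in># Y" using xs(1) ys(1) len by auto
    then have "norm (xs ! j - ys ! j) \<le> \<bar>a \<bullet> xs ! j - a \<bullet> ys ! j\<bar> / \<delta>"
      using separated assms(5) by (simp add: field_simps inner_diff_right)
    then show "l1norm (xs ! j - ys ! j) \<le> real DIM('d) / \<delta> * \<bar>a \<bullet> xs ! j - a \<bullet> ys ! j\<bar>"
      using l1norm_le_norm[of "xs ! j - ys ! j"]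
      by (smt (verit, best) mult_left_mono of_nat_0_le_iff times_divide_eq_left times_divide_eq_right)
  qed
  also have "\<dots> = real DIM('d) / \<delta> * (\<Sum>i<n. \<bar>sort_embed X a ! i - sort_embed Y a ! i\<bar>)"
    using xs ys len by (simp add: sum_distrib_left)
  also have "\<dots> \<le> real DIM('d) / \<delta> * (real n * lp_dist p (sort_embed X a) (sort_embed Y a))"
    using sum_abs_diff_le_lp_dist[OF assms(1), of "sort_embed X a" "sort_embed Y a"] assms
    by (intro mult_left_mono) auto
  finally show ?thesis using assms(4,5) by (simp add: field_simps)
qed

lemma lipschitz_on_sort_embed_nth:
  fixes X :: "'d::euclidean_space multiset"
  assumes "i < size X"
  shows "(\<Sum>x\<in>#X. norm x)-lipschitz_on UNIV (\<lambda>a. sort_embed X a ! i)"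
proof (rule lipschitz_onI)
  fix a b :: 'd
  define P where "P = image_mset (\<lambda>x. (a \<bullet> x, b \<bullet> x)) X"
  have "\<bar>sort_embed X a ! i - sort_embed X b ! i\<bar>
      \<le> (\<Sum>i<size X. \<bar>sort_embed X a ! i - sort_embed X b ! i\<bar>)"
    using assms by (intro member_le_sum) auto
  also have "\<dots> = sorted_l1_dist (image_mset fst P) (image_mset snd P)"
    unfolding sum_abs_sort_embed_diff P_def by (simp add: image_mset.compositionality comp_def)
  also have "\<dots> \<le> coupling_cost P"
    by (rule sorted_l1_dist_le_coupling_cost)
  also have "\<dots> = (\<Sum>x\<in>#X. \<bar>(a - b) \<bullet> x\<bar>)"
    unfolding coupling_cost_def P_def by (simp add: image_mset.compositionality comp_def inner_diff_left)
  also have "\<dots> \<le> (\<Sum>x\<in>#X. norm x * norm (a - b))"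
    by (rule sum_mset_mono) (metis Cauchy_Schwarz_ineq2 mult.commute)
  finally show "dist (sort_embed X a ! i) (sort_embed X b ! i) \<le> (\<Sum>x\<in>#X. norm x) * dist a b"
    by (simp add: dist_norm dist_real_def sum_mset_distrib_right)
qed (induction X, auto)

lemma continuous_on_lp_dist_sort_embed:
  fixes X Y :: "'d::euclidean_space multiset"
  assumes "p \<ge> 1" "size Y = size X"
  shows "continuous_on UNIV (\<lambda>a. lp_dist p (sort_embed X a) (sort_embed Y a))"
proof -
  have "continuous_on UNIV (\<lambda>a. sort_embed Z a ! i)" if "i < size Z" for Z :: "'d multiset" and i
    using lipschitz_on_sort_embed_nth[OF that] by (rule lipschitz_on_continuous_on)
  then have "continuous_on UNIV (\<lambda>a. \<bar>sort_embed X a ! i - sort_embed Y a ! i\<bar> powr p)"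
    if "i < size X" for i
    using assms that by (intro continuous_on_powr' continuous_intros) auto
  then have "continuous_on UNIV
      (\<lambda>a. \<Sum>i<size X. \<bar>sort_embed X a ! i - sort_embed Y a ! i\<bar> powr p)"
    by (intro continuous_on_sum) auto
  then show ?thesis
    unfolding lp_dist_def using assms
    by (intro continuous_on_powr' continuous_intros) (auto intro: sum_nonneg)
qed

section \<open>Thin slabs of random directions\<close>

lemma prob_thin_slab_small:
  fixes M :: "'a::euclidean_space measure"
  assumes "prob_space M" and sets_M: "sets M = sets borel" and "measure M {a. a \<bullet> u = 0} = 0" "\<eta> > 0"
  shows "\<exists>\<delta>>0. measure M {a. \<bar>a \<bullet> u\<bar> < \<delta>} \<le> \<eta>"
proof -
  interpret prob_space M by fact
  define S where "S k = {a. \<bar>a \<bullet> u\<bar> < 1 / Suc k}" for k :: nat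
  have "range S \<subseteq> events" unfolding S_def sets_M by auto
  moreover have "decseq S"
    unfolding S_def decseq_def by (auto simp: frac_le intro: order.strict_trans2)
  ultimately have "(\<lambda>k. prob (S k)) \<longlonglongrightarrow> prob (\<Inter>k. S k)"
    by (rule finite_Lim_measure_decseq)
  moreover have "(\<Inter>k. S k) = {a. a \<bullet> u = 0}"
  proof (intro equalityI subsetI)
    fix a assume a: "a \<in> (\<Inter>k. S k)"
    show "a \<in> {a. a \<bullet> u = 0}"
    proof (rule ccontr)
      assume "a \<notin> {a. a \<bullet> u = 0}"
      then obtain k where "inverse (real (Suc k)) < \<bar>a \<bullet> u\<bar>"
        using reals_Archimedean[of "\<bar>a \<bullet> u\<bar>"] by auto
      moreover have "\<bar>a \<bullet> u\<bar> < 1 / Suc k" using a unfolding S_def by blast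
      ultimately show False by (metis inverse_eq_divide order_less_asym)
    qed
  qed (simp add: S_def)
  ultimately have "(\<lambda>k. prob (S k)) \<longlonglongrightarrow> 0" using assms(3) by simp
  then obtain k where "prob (S k) < \<eta>"
    using \<open>\<eta> > 0\<close> by (metis order_tendstoD(2) eventually_sequentially order.refl)
  then show ?thesis unfolding S_def by (intro exI[of _ "1 / Suc k"]) auto
qed

lemma measure_slab_le_measure_tilted_slab:
  fixes M :: "'a::euclidean_space measure"
  assumes "prob_space M" "sets M = sets borel" "AE a in M. norm a \<le> 1"
  shows "measure M {a. \<bar>a \<bullet> u\<bar> < r} \<le> measure M {a. \<bar>a \<bullet> w\<bar> < r + dist u w}"
proof -
  interpret prob_space M by fact
  have "AE a in M. \<bar>a \<bullet> u\<bar> < r \<longrightarrow> \<bar>a \<bullet> w\<bar> < r + dist u w"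
    using assms(3)
  proof eventually_elim
    case (elim a)
    have "\<bar>a \<bullet> (w - u)\<bar> \<le> norm a * norm (w - u)" by (rule Cauchy_Schwarz_ineq2)
    also have "\<dots> \<le> dist u w"
      using elim by (simp add: dist_norm norm_minus_commute mult_left_le_one_le)
    finally show ?case unfolding inner_diff_right by linarith
  qed
  then show ?thesis by (intro finite_measure_mono_AE) (auto simp: assms(2))
qed

text \<open>Uniformity in the direction comes from compactness of the unit sphere: by the previous lemma,
  tilting the normal of a slab by \<open>\<epsilon>\<close> widens it by at most \<open>\<epsilon>\<close>.\<close>

lemma prob_thin_slab_small_uniform:
  fixes M :: "'a::euclidean_space measure"
  assumes "prob_space M" and sets_M: "sets M = sets borel"
    and null: "\<And>u. norm u = 1 \<Longrightarrow> measure M {a. a \<bullet> u = 0} = 0"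
    and bounded: "AE a in M. norm a \<le> 1" and "\<eta> > 0"
  shows "\<exists>\<delta>>0. \<forall>v. measure M {a. \<bar>a \<bullet> v\<bar> < \<delta> * norm v} \<le> \<eta>"
proof -
  interpret prob_space M by fact
  define d where "d u = (SOME \<delta>. \<delta> > 0 \<and> measure M {a. \<bar>a \<bullet> u\<bar> < \<delta>} \<le> \<eta>)" for u :: 'a
  have d: "d u > 0" "measure M {a. \<bar>a \<bullet> u\<bar> < d u} \<le> \<eta>" if "norm u = 1" for u
    using someI_ex[OF prob_thin_slab_small[OF \<open>prob_space M\<close> sets_M null[OF that] \<open>\<eta> > 0\<close>]]
    unfolding d_def by auto
  have "sphere 0 1 \<subseteq> (\<Union>u\<in>sphere 0 1. ball u (d u / 2))"
  proof
    fix u :: 'a assume "u \<in> sphere 0 1"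
    then show "u \<in> (\<Union>u\<in>sphere 0 1. ball u (d u / 2))" using d(1)[of u] by (intro UN_I) auto
  qed
  then obtain C where C: "C \<subseteq> sphere 0 1" "finite C" "sphere 0 1 \<subseteq> (\<Union>u\<in>C. ball u (d u / 2))"
    by (rule compactE_image[OF compact_sphere, rotated]) auto
  define \<delta> where "\<delta> = Min (insert 1 ((\<lambda>u. d u / 2) ` C))"
  have "\<delta> > 0" unfolding \<delta>_def using C d by (subst Min_gr_iff) auto
  have \<delta>_le: "\<delta> \<le> d u / 2" if "u \<in> C" for u unfolding \<delta>_def using C that by (intro Min_le) auto
  have unit: "measure M {a. \<bar>a \<bullet> u\<bar> < \<delta>} \<le> \<eta>" if u: "norm u = 1" for u
  proof -
    obtain u0 where u0: "u0 \<in> C" "dist u0 u < d u0 / 2" using C u by force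
    have "measure M {a. \<bar>a \<bullet> u\<bar> < \<delta>} \<le> measure M {a. \<bar>a \<bullet> u0\<bar> < \<delta> + dist u u0}"
      by (rule measure_slab_le_measure_tilted_slab[OF \<open>prob_space M\<close> sets_M bounded])
    also have "\<dots> \<le> measure M {a. \<bar>a \<bullet> u0\<bar> < d u0}"
      using \<delta>_le[OF u0(1)] u0(2) by (intro finite_measure_mono) (auto simp: sets_M dist_commute)
    also have "\<dots> \<le> \<eta>" using d(2) u0(1) C(1) by auto
    finally show ?thesis .
  qed
  have "measure M {a. \<bar>a \<bullet> v\<bar> < \<delta> * norm v} \<le> \<eta>" for v :: 'a
  proof (cases "v = 0")
    case False
    have "{a. \<bar>a \<bullet> v\<bar> < \<delta> * norm v} = {a. \<bar>a \<bullet> (v /\<^sub>R norm v)\<bar> < \<delta>}"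
      using False by (auto simp: field_simps abs_mult)
    then show ?thesis using unit[of "v /\<^sub>R norm v"] False by simp
  qed (simp add: \<open>\<eta> > 0\<close> less_imp_le)
  then show ?thesis using \<open>\<delta> > 0\<close> by blast
qed

lemma card_set_mset_le_size: "card (set_mset X) \<le> size X"
  by (induction X) (auto simp: card_insert_if)

lemma prob_separating_direction:
  fixes M :: "'d::euclidean_space measure" and X Y :: "'d multiset"
  assumes "prob_space M" "sets M = sets borel" "size X = n" "size Y = n" "n \<ge> 1"
    and slab: "\<And>v. measure M {a. \<bar>a \<bullet> v\<bar> < \<delta> * norm v} \<le> 1 / (2 * real n ^ 2)"
  shows "measure M {a. \<forall>x\<in>#X. \<forall>y\<in>#Y. \<delta> * norm (x - y) \<le> \<bar>a \<bullet> (x - y)\<bar>} \<ge> 1 / 2"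
proof -
  interpret prob_space M by fact
  define V where "V = (\<lambda>(x, y). x - y) ` (set_mset X \<times> set_mset Y)"
  define B where "B = (\<Union>v\<in>V. {a. \<bar>a \<bullet> v\<bar> < \<delta> * norm v})"
  have "finite V" unfolding V_def by simp
  have "card V \<le> card (set_mset X \<times> set_mset Y)"
    unfolding V_def by (rule card_image_le) simp
  also have "\<dots> \<le> n * n"
    unfolding card_cartesian_product using assms(3,4) card_set_mset_le_size
    by (metis mult_le_mono)
  finally have card_V: "real (card V) \<le> real n ^ 2"
    by (simp add: power2_eq_square flip: of_nat_mult)
  have slab_events: "{a. \<bar>a \<bullet> v\<bar> < \<delta> * norm v} \<in> events" for v
    using \<open>sets M = sets borel\<close> by simp
  have B_events: "B \<in> events"
    unfolding B_def using \<open>finite V\<close> slab_events by (intro sets.finite_UN) auto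
  have "prob B \<le> (\<Sum>v\<in>V. prob {a. \<bar>a \<bullet> v\<bar> < \<delta> * norm v})"
    unfolding B_def using \<open>finite V\<close> slab_events
    by (intro finite_measure_subadditive_finite) auto
  also have "\<dots> \<le> real (card V) * (1 / (2 * real n ^ 2))"
    using sum_mono[of V _ "\<lambda>_. 1 / (2 * real n ^ 2)", OF slab] by simp
  also have "\<dots> \<le> 1 / 2"
    using card_V assms(5) by (simp add: field_simps)
  finally have "prob B \<le> 1 / 2" .
  moreover have "{a. \<forall>x\<in>#X. \<forall>y\<in>#Y. \<delta> * norm (x - y) \<le> \<bar>a \<bullet> (x - y)\<bar>} = space M - B"
    using sets_eq_imp_space_eq[OF \<open>sets M = sets borel\<close>] unfolding B_def V_def
    by (fastforce simp: not_less)
  ultimately show ?thesis using prob_compl[OF B_events] by simp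
qed

lemma (in prob_space) mult_prob_le_expectation:
  fixes g :: "'a \<Rightarrow> real"
  assumes "integrable M g" "AE a in M. 0 \<le> g a" "G \<in> events" "\<And>a. a \<in> G \<Longrightarrow> k \<le> g a"
  shows "k * prob G \<le> expectation g"
proof -
  have "integrable M (indicator G :: 'a \<Rightarrow> real)"
    by (intro integrable_real_indicator assms(3)) (simp add: less_top[symmetric])
  then have "(\<integral>a. indicator G a * k \<partial>M) \<le> expectation g"
    using assms by (intro integral_mono_AE) (auto split: split_indicator)
  then show ?thesis using assms(3) by (simp add: mult.commute)
qed

section \<open>The uniform distribution on the sphere\<close>

lemma sets_uniform_sphere [measurable_cong]: "sets uniform_sphere = sets borel"
  by (simp add: uniform_sphere_def)

lemma prob_space_uniform_sphere: "prob_space (uniform_sphere :: 'd::euclidean_space measure)"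
  unfolding uniform_sphere_def
proof (rule prob_space.prob_space_distr)
  have "emeasure lborel (ball (0::'d) 1) \<noteq> \<infinity>"
    using emeasure_lborel_ball_finite[of "0::'d" 1] by simp
  moreover have "measure lborel (ball (0::'d) 1) > 0"
    using content_ball_pos[of 1 "0::'d"] by simp
  ultimately show "prob_space (uniform_measure lborel (ball (0::'d) 1))"
    by (intro prob_space_uniform_measure) (auto simp: emeasure_eq_ennreal_measure)
qed simp

lemma AE_uniform_sphere:
  assumes "{a. P a} \<in> sets borel"
  shows "(AE a in uniform_sphere. P a) \<longleftrightarrow>
    (AE x in uniform_measure lborel (ball 0 1). P (x /\<^sub>R norm x))"
  unfolding uniform_sphere_def using assms by (subst AE_distr_iff) auto

lemma AE_uniform_sphere_norm_le_1: "AE a in uniform_sphere. norm (a::'d::euclidean_space) \<le> 1"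
proof -
  have "norm (x /\<^sub>R norm x) \<le> 1" for x :: 'd by (cases "x = 0") auto
  then show ?thesis by (subst AE_uniform_sphere) auto
qed

lemma uniform_sphere_hyperplane_null:
  fixes u :: "'d::euclidean_space"
  assumes "u \<noteq> 0"
  shows "measure uniform_sphere {a. a \<bullet> u = 0} = 0"
proof -
  interpret prob_space "uniform_sphere :: 'd measure" by (rule prob_space_uniform_sphere)
  have "negligible {x::'d. u \<bullet> x = 0}" using assms by (intro negligible_hyperplane) simp
  then have "{x::'d. u \<bullet> x = 0} \<in> null_sets lborel"
    using null_sets_completion_iff[of "{x. u \<bullet> x = 0}" lborel]
    by (simp add: negligible_iff_null_sets)
  then have "AE x in lborel. x \<bullet> u \<noteq> 0"
    by (rule AE_I') (auto simp: inner_commute)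
  then have "AE x in uniform_measure lborel (ball 0 1). (x /\<^sub>R norm x) \<bullet> u \<noteq> 0"
    by (intro AE_uniform_measureI) (auto elim!: eventually_mono)
  then have "AE a in uniform_sphere. a \<notin> {a. a \<bullet> u = 0}"
    by (subst AE_uniform_sphere) auto
  then show ?thesis by (subst prob_eq_0) auto
qed

section \<open>Lower bound in expectation\<close>

lemma expectation_sort_embed_ratio_ge:
  fixes X Y :: "'d::euclidean_space multiset"
  assumes "p \<ge> 1" "size X = n" "size Y = n" "n \<ge> 1" "\<delta> > 0" "W1 X Y > 0"
    and separating: "measure uniform_sphere
        {a. \<forall>x\<in>#X. \<forall>y\<in>#Y. \<delta> * norm (x - y) \<le> \<bar>a \<bullet> (x - y)\<bar>} \<ge> 1 / 2"
  shows "(\<delta> / (real n * real DIM('d))) powr p / 2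
    \<le> (\<integral>a. (lp_dist p (sort_embed X a) (sort_embed Y a) / W1 X Y) powr p \<partial>uniform_sphere)"
proof -
  interpret prob_space "uniform_sphere :: 'd measure" by (rule prob_space_uniform_sphere)
  define K where "K = \<delta> / (real n * real DIM('d))"
  define g where "g a = (lp_dist p (sort_embed X a) (sort_embed Y a) / W1 X Y) powr p" for a
  define G where "G = {a. \<forall>x\<in>#X. \<forall>y\<in>#Y. \<delta> * norm (x - y) \<le> \<bar>a \<bullet> (x - y)\<bar>}"
  have "K > 0" unfolding K_def using assms(4,5) by simp
  have "(\<lambda>a. lp_dist p (sort_embed X a) (sort_embed Y a)) \<in> borel_measurable borel"
    using continuous_on_lp_dist_sort_embed[OF assms(1), of Y X] assms(2,3)
    by (intro borel_measurable_continuous_onI) simp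
  then have "g \<in> borel_measurable borel"
    unfolding g_def by measurable
  moreover have "AE a in uniform_sphere. norm (g a) \<le> 1"
    using AE_uniform_sphere_norm_le_1
  proof eventually_elim
    case (elim a)
    then have "lp_dist p (sort_embed X a) (sort_embed Y a) \<le> W1 X Y"
      using assms by (intro lp_dist_sort_embed_le_W1) auto
    then show ?case
      unfolding g_def using assms(1,6) lp_dist_nonneg by (auto intro!: powr_le1)
  qed
  ultimately have "integrable uniform_sphere g"
    by (intro integrable_const_bound[of _ 1]) (auto simp: measurable_cong_sets[OF sets_uniform_sphere])
  moreover have "K powr p \<le> g a" if "a \<in> G" for a
  proof -
    have "K * W1 X Y \<le> lp_dist p (sort_embed X a) (sort_embed Y a)"
      unfolding K_def using that assms G_def by (intro W1_le_lp_dist_sort_embed) auto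
    then show ?thesis
      unfolding g_def using assms \<open>K > 0\<close> by (intro powr_mono2) (auto simp: field_simps)
  qed
  moreover have "G \<in> events" unfolding G_def by simp
  ultimately have "K powr p * prob G \<le> expectation g"
    by (intro mult_prob_le_expectation) (auto simp: g_def)
  moreover have "K powr p / 2 \<le> K powr p * prob G"
    using mult_left_mono[OF separating, of "K powr p"] unfolding G_def by simp
  ultimately show ?thesis unfolding K_def g_def by linarith
qed

lemma sort_embed_lower_bound_in_expectation:
  assumes "p \<ge> 1"
  shows "\<exists>c>0. \<forall>X Y :: 'd::euclidean_space multiset. size X = n \<longrightarrow> size Y = n \<longrightarrow> W1 X Y > 0 \<longrightarrow>
    c powr p \<le> (\<integral>a. (lp_dist p (sort_embed X a) (sort_embed Y a) / W1 X Y) powr p \<partial>uniform_sphere)"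
proof (cases "n = 0")
  case True
  then show ?thesis by (intro exI[of _ 1]) (simp add: W1_empty)
next
  case False
  obtain \<delta> where "\<delta> > 0"
    and slab: "\<And>v::'d. measure uniform_sphere {a. \<bar>a \<bullet> v\<bar> < \<delta> * norm v} \<le> 1 / (2 * real n ^ 2)"
    using prob_thin_slab_small_uniform[OF prob_space_uniform_sphere sets_uniform_sphere
        uniform_sphere_hyperplane_null AE_uniform_sphere_norm_le_1, of "1 / (2 * real n ^ 2)"] False
    by fastforce
  define c where "c = ((\<delta> / (real n * real DIM('d))) powr p / 2) powr (1 / p)"
  have "c > 0" unfolding c_def using \<open>\<delta> > 0\<close> False by simp
  moreover have c_powr: "c powr p = (\<delta> / (real n * real DIM('d))) powr p / 2"
    unfolding c_def using assms by (simp add: powr_powr)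
  ultimately show ?thesis
  proof (intro exI[of _ c] conjI allI impI)
    fix X Y :: "'d multiset" assume XY: "size X = n" "size Y = n" "W1 X Y > 0"
    have "measure uniform_sphere
        {a. \<forall>x\<in>#X. \<forall>y\<in>#Y. \<delta> * norm (x - y) \<le> \<bar>a \<bullet> (x - y)\<bar>} \<ge> 1 / 2"
      using XY False slab
      by (intro prob_separating_direction[OF prob_space_uniform_sphere sets_uniform_sphere]) auto
    then show "c powr p \<le> (\<integral>a. (lp_dist p (sort_embed X a) (sort_embed Y a) / W1 X Y) powr p \<partial>uniform_sphere)"
      unfolding c_powr using XY False assms \<open>\<delta> > 0\<close>
      by (intro expectation_sort_embed_ratio_ge) auto
  qed
qed

theorem mainTheorem7:
  fixes \<Omega> :: "'d::euclidean_space set" and n :: nat and p :: real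
  assumes "p \<ge> 1" and "compact \<Omega>"
  shows "uniformly_lipschitz sort_embed (S_eq n \<Omega>) (sphere 0 1) W1 (lp_dist p)
       \<and> lower_lipschitz_in_expectation sort_embed (S_eq n \<Omega>) uniform_sphere p W1 (lp_dist p)"
proof
  show "uniformly_lipschitz sort_embed (S_eq n \<Omega>) (sphere 0 1) W1 (lp_dist p)"
    unfolding uniformly_lipschitz_def
    by (rule exI[of _ 1]) (auto simp: S_eq_def intro!: lp_dist_sort_embed_le_W1[OF assms(1)])
  obtain c where "c > 0" and c: "\<forall>X Y :: 'd multiset. size X = n \<longrightarrow> size Y = n \<longrightarrow> W1 X Y > 0 \<longrightarrow>
      c powr p \<le> (\<integral>a. (lp_dist p (sort_embed X a) (sort_embed Y a) / W1 X Y) powr p \<partial>uniform_sphere)"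
    using sort_embed_lower_bound_in_expectation[OF assms(1)] by blast
  then show "lower_lipschitz_in_expectation sort_embed (S_eq n \<Omega>) uniform_sphere p W1 (lp_dist p)"
    unfolding lower_lipschitz_in_expectation_def S_eq_def by blast
qed

end
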